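(* Let $(T_1,T_2,T_3)$ be an associative Clifford extension over $(V,S^0,S^1)$. Then for any $v_1,v_2\in V$ the linear operator on $T_2$ given by $t\mapsto \big(v_1(v_2s^0)\big)\big(s^0t\big)$ is the same for all unit vectors $s^0\in S^0$. (Here $v_1(v_2s^0)\in S^0$, $s^0t\in T_1$, and the result lies in $T_2$.)
   Context: All spaces are finite-dimensional real Euclidean. For a Euclidean space $X$, $\mathrm{Cl}(X)$ is the Clifford algebra with $x\cdot x=-|x|^2$; a "$\mathrm{Cl}(X)$-module $Y\oplus Z$" is a $\mathbb Z/2$-graded module with $X\cdot Y\subset Z$, $X\cdot Z\subset Y$, $Y\perp Z$, each $x\in X$ acting skew-symmetrically; the action is written $xy$. Let $V\neq0$ be Euclidean and $S^0\oplus S^1$ a nonzero $\mathrm{Cl}(V)$-module. A Clifford extension over $(V,S^0,S^1)$ is a triple of Euclidean spaces $T_1,T_2,T_3$ of equal dimension together with a $\mathrm{Cl}(V)$-module structure on $T_2\oplus T_3$, a $\mathrm{Cl}(S^0)$-module structure on $T_1\oplus T_2$, and a $\mathrm{Cl}(S^1)$-module structure on $T_1\oplus T_3$. It is associative if $(vs^0)t_1=v(s^0t_1)$ for all $v\in V,s^0\in S^0,t_1\in T_1$. *)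

theory Defs
  imports "HOL-Analysis.Analysis"
begin

definition fin_dim :: "'a::real_inner itself \<Rightarrow> bool" where
  "fin_dim _ \<longleftrightarrow> (\<exists>B::'a set. finite B \<and> span B = UNIV)"

text \<open>A Z/2-graded Cl(X)-module Y (+) Z: the action of x on Y(+)Z is given by
  a x : Y -> Z and b x : Z -> Y, linear in x, with x.x = -|x|^2 and each x acting
  skew-symmetrically.  (Y and Z are distinct types, hence orthogonal.)\<close>
definition cl_module ::
  "('x::real_inner \<Rightarrow> 'y::real_inner \<Rightarrow> 'z::real_inner) \<Rightarrow> ('x \<Rightarrow> 'z \<Rightarrow> 'y) \<Rightarrow> bool" where
  "cl_module a b \<longleftrightarrow>
     bilinear a \<and> bilinear b \<and>
     (\<forall>x y. b x (a x y) = - ((norm x)\<^sup>2 *\<^sub>R y)) \<and>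
     (\<forall>x z. a x (b x z) = - ((norm x)\<^sup>2 *\<^sub>R z)) \<and>
     (\<forall>x y z. inner (a x y) z = - inner y (b x z))"

end

theory Submission
  imports Defs
begin

(* Associativity (v s0) t1 = v (s0 t1) dualises, because a nonzero v acts invertibly on
   S0 + S1, to (v s1) t1 = v (s1 t1).  Applying both forms,
   (v1 (v2 s)) (s t) = v1 (v2 (s (s t))) = - v1 (v2 t) for every unit vector s,
   and the right-hand side does not involve s. *)

lemma cl_module_bilinear_left:
  "cl_module a b \<Longrightarrow> bilinear a"
  and cl_module_bilinear_right:
  "cl_module a b \<Longrightarrow> bilinear b"
  unfolding cl_module_def by simp_all

lemma cl_module_square_left:
  "cl_module a b \<Longrightarrow> b x (a x y) = - ((norm x)\<^sup>2 *\<^sub>R y)"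
  and cl_module_square_right:
  "cl_module a b \<Longrightarrow> a x (b x z) = - ((norm x)\<^sup>2 *\<^sub>R z)"
  unfolding cl_module_def by blast+

lemma cl_module_unit_square:
  "cl_module a b \<Longrightarrow> norm x = 1 \<Longrightarrow> a x (b x z) = - z"
  by (simp add: cl_module_square_right)

lemma cl_module_surj_left:
  assumes "cl_module a b" and "x \<noteq> 0"
  shows "a x ((- 1 / (norm x)\<^sup>2) *\<^sub>R b x z) = z"
proof -
  have "a x ((- 1 / (norm x)\<^sup>2) *\<^sub>R b x z) = (- 1 / (norm x)\<^sup>2) *\<^sub>R a x (b x z)"
    using cl_module_bilinear_left[OF assms(1)] by (rule bilinear_rmul)
  then show ?thesis
    using assms by (simp add: cl_module_square_right)
qed

lemma clifford_assoc_dual: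
  assumes vS: "cl_module vS0 vS1" and vT: "cl_module vT2 vT3" and s0T: "cl_module s0T1 s0T2"
    and assoc: "\<And>v x y. s1T1 (vS0 v x) y = vT2 v (s0T1 x y)"
  shows "s0T1 (vS1 v u) t = vT3 v (s1T1 u t)"
proof (cases "v = 0")
  case True
  then show ?thesis
    using bilinear_lzero[OF cl_module_bilinear_right[OF vS]]
      bilinear_lzero[OF cl_module_bilinear_left[OF s0T]]
      bilinear_lzero[OF cl_module_bilinear_right[OF vT]]
    by simp
next
  case False
  define y where "y = (- 1 / (norm v)\<^sup>2) *\<^sub>R vS1 v u"
  have u: "u = vS0 v y"
    unfolding y_def using cl_module_surj_left[OF vS False] by simp
  have "s0T1 (vS1 v u) t = s0T1 (- ((norm v)\<^sup>2 *\<^sub>R y)) t"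
    unfolding u cl_module_square_left[OF vS] ..
  also have "\<dots> = - ((norm v)\<^sup>2 *\<^sub>R s0T1 y t)"
    using cl_module_bilinear_left[OF s0T] by (simp add: bilinear_lneg bilinear_lmul)
  also have "\<dots> = vT3 v (vT2 v (s0T1 y t))"
    unfolding cl_module_square_left[OF vT] ..
  also have "\<dots> = vT3 v (s1T1 u t)"
    unfolding u assoc ..
  finally show ?thesis .
qed

lemma clifford_extension_operator_unit:
  assumes vS: "cl_module vS0 vS1" and vT: "cl_module vT2 vT3" and s0T: "cl_module s0T1 s0T2"
    and assoc: "\<And>v x y. s1T1 (vS0 v x) y = vT2 v (s0T1 x y)"
    and "norm s = 1"
  shows "s0T1 (vS1 v1 (vS0 v2 s)) (s0T2 s t) = - vT3 v1 (vT2 v2 t)"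
proof -
  have "s0T1 (vS1 v1 (vS0 v2 s)) (s0T2 s t) = vT3 v1 (s1T1 (vS0 v2 s) (s0T2 s t))"
    by (rule clifford_assoc_dual[OF vS vT s0T assoc])
  also have "\<dots> = vT3 v1 (vT2 v2 (- t))"
    unfolding assoc cl_module_unit_square[OF s0T \<open>norm s = 1\<close>] ..
  also have "\<dots> = - vT3 v1 (vT2 v2 t)"
    using cl_module_bilinear_left[OF vT] cl_module_bilinear_right[OF vT]
    by (simp add: bilinear_rneg)
  finally show ?thesis .
qed

theorem mainTheorem7:
  fixes vS0 :: "'v::real_inner \<Rightarrow> 's0::real_inner \<Rightarrow> 's1::real_inner"
    and vS1 :: "'v \<Rightarrow> 's1 \<Rightarrow> 's0"
    and vT2 :: "'v \<Rightarrow> 't2::real_inner \<Rightarrow> 't3::real_inner"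
    and vT3 :: "'v \<Rightarrow> 't3 \<Rightarrow> 't2"
    and s0T1 :: "'s0 \<Rightarrow> 't1::real_inner \<Rightarrow> 't2"
    and s0T2 :: "'s0 \<Rightarrow> 't2 \<Rightarrow> 't1"
    and s1T1 :: "'s1 \<Rightarrow> 't1 \<Rightarrow> 't3"
    and s1T3 :: "'s1 \<Rightarrow> 't3 \<Rightarrow> 't1"
    and v1 v2 :: 'v and s s' :: 's0 and t :: 't2
  assumes "fin_dim TYPE('v)" and "fin_dim TYPE('s0)" and "fin_dim TYPE('s1)"
    and "fin_dim TYPE('t1)" and "fin_dim TYPE('t2)" and "fin_dim TYPE('t3)"
    and "\<exists>v::'v. v \<noteq> 0"
    and "(\<exists>x::'s0. x \<noteq> 0) \<or> (\<exists>y::'s1. y \<noteq> 0)"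
    and "cl_module vS0 vS1"
    and "dim (UNIV::'t1 set) = dim (UNIV::'t2 set)"
    and "dim (UNIV::'t2 set) = dim (UNIV::'t3 set)"
    and "cl_module vT2 vT3"
    and "cl_module s0T1 s0T2"
    and "cl_module s1T1 s1T3"
    and assoc: "\<forall>v x y. s1T1 (vS0 v x) y = vT2 v (s0T1 x y)"
    and "norm s = 1" and "norm s' = 1"
  shows "s0T1 (vS1 v1 (vS0 v2 s)) (s0T2 s t) = s0T1 (vS1 v1 (vS0 v2 s')) (s0T2 s' t)"
  using clifford_extension_operator_unit[OF assms(9,12,13) assoc[rule_format]]
    \<open>norm s = 1\<close> \<open>norm s' = 1\<close>
  by simp

end
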